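(* Consider, on the reference element $E=[-1,1]^3$ of a moving curved hexahedral element, the split form ALE discontinuous Galerkin spectral element semi-discretization of the three-dimensional compressible Euler equations described in the context, with time-differentiable nodal values $\mathcal{J}_{ijk}(\tau)$ and $\mathbf{U}_{ijk}(\tau)$. Suppose the volume flux functions $\mathbf{G}^{\#}_\iota$ and the surface flux functions $\mathbf{G}^{*}_\iota$, $\iota=1,2,3$, satisfy Jameson's conditions $$\mathbf{G}^{\upsilon+1,\#}_\iota=\mathbf{G}^{1,\#}_\iota\{\{u_\upsilon\}\}+\{\{p\}\}\,\delta_{\iota\upsilon},\qquad \mathbf{G}^{\upsilon+1,*}_\iota=\mathbf{G}^{1,*}_\iota\{\{u_\upsilon\}\}+\{\{p\}\}^{\star}\,\delta_{\iota\upsilon},\qquad \upsilon=1,2,3,$$ where $\{\{p\}\}^{\star}$ can be any consistent numerical trace approximation of the pressure (in the volume condition the averages are taken of the two nodal states entering $\mathbf{G}^{\#}_\iota$, in the surface condition of the interior and exterior states), and the Cartesian surface mass fluxes $\mathbf{G}^{1,*}_\iota$ are consistent with $\rho(u_\iota-\nu_\iota)$, $\iota=1,2,3$. Then for every element the scheme satisfies $$\frac{\partial}{\partial\tau}\big\langle I^N(\Bbbk),\mathcal{J}\big\rangle_N=-\frac12\sum_{\iota=1}^3\Big\langle \Big(\frac{\partial I^N(p)}{\partial\xi^\iota}\Big)\mathbb{J}\vec a^{\,\iota}+p\Big(\frac{\partial I^N(\mathbb{J}\vec a^{\,\iota})}{\partial\xi^\iota}\Big)+\Big(\frac{\partial I^N(p\,\mathbb{J}\vec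 a^{\,\iota})}{\partial\xi^\iota}\Big),\vec u\Big\rangle_N-\sum_{\iota=1}^3\int_{\partial E,N}\hat s\,n_\iota\Big[\tfrac12\overline{|\vec u|}^{2}\,\mathbf{G}^{1,*}_\iota+\big(\{\{p\}\}^{\star}-p^-\big)u_\iota^-\Big]\,dS,$$ where $\Bbbk=\frac12\rho|\vec u|^2$ is the kinetic energy, $\overline{|\vec u|}^{2}:=\sum_{\iota=1}^3\big(2\{\{u_\iota\}\}^2-\{\{u_\iota^2\}\}\big)$, and $u_\iota^-$, $p^-$ are the interior (own-element) values at the surface nodes.
   Context: Euler setting: state $\mathbf{u}=[\rho,\rho\vec u,\rho e+\tfrac12\rho|\vec u|^2]^T\in\mathbb{R}^5$ with density $\rho$, velocity $\vec u=(u_1,u_2,u_3)$, pressure $p$, $e=p/((\gamma-1)\rho)$, $\gamma>1$. Advective fluxes $\mathbf{f}_\iota$ ($\iota=1,2,3$) have components $\mathbf{f}^1_\iota=\rho u_\iota$, $\mathbf{f}^{\upsilon+1}_\iota=\rho u_\iota u_\upsilon+p\delta_{\iota\upsilon}$ ($\upsilon=1,2,3$), $\mathbf{f}^5_\iota=\rho u_\iota(e+\frac12|\vec u|^2)+pu_\iota$; superscripts $1,\dots,5$ denote components. $\vec\nu=(\nu_1,\nu_2,\nu_3)$ is the prescribed grid velocity. Discretization: $\{\xi_i\}_{i=0}^N$ are the Legendre–Gauss–Lobatto (LGL) nodes on $[-1,1]$ ($\xi_0=-1,\xi_N=1$) with weights $\omega_i$, $\ell_j$ the Lagrange polynomials on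 them, $\mathcal{D}_{ij}=\ell_j'(\xi_i)$; $\omega_{ijk}=\omega_i\omega_j\omega_k$. All quantities are represented by nodal values at the tensor LGL nodes $(\xi_i,\xi_j,\xi_k)$; $I^N(g)=\sum_{ijk}g_{ijk}\ell_i(\xi^1)\ell_j(\xi^2)\ell_k(\xi^3)$ is tensor-product interpolation, and derivatives $\partial/\partial\xi^\iota$ are exact derivatives of interpolants. Discrete inner product: $\langle \mathbf f,\mathbf g\rangle_N=\sum_{i,j,k=0}^N\omega_{ijk}\mathbf f_{ijk}^T\mathbf g_{ijk}$ (also for scalar or 3-vector valued functions). Discrete surface integral: for $h$ defined at surface nodes (possibly depending on the outward reference normal $\hat n=(\hat n^1,\hat n^2,\hat n^3)$ of the face), $\int_{\partial E,N}h\,dS$ is the sum over the six faces of $E$ of the tensor LGL quadrature (weights $\omega$ in the two tangential directions) of $h$ at the face nodes; for fluxes, $\int_{\partial E,N}\boldsymbol\varphi^T\mathbf F_1\hat n^1dS=\sum_{j,k}\omega_j\omega_k(\boldsymbol\varphi_{Njk}^T(\mathbf F_1)_{Njk}-\boldsymbol\varphi_{0jk}^T(\mathbf F_1)_{0jk})$ and analogously in directions 2, 3. $\mathcal{J}_{ijk}(\tau)$ are nodal values of the discrete Jacobian; $\mathbb{J}\vec a^{\,\iota}$ ($\iota=1,2,3$) are discrete volume-weighted contravariant vectors with Cartesian components $\mathbb{J}a^\iota_\beta$; on faces, $\hat s=|\sum_\iota \mathbb{J}\vec a^{\,\iota}\hat n^\iota|$ and $\vec n=\hat s^{-1}\sum_\iota\mathbb{J}\vec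 a^{\,\iota}\hat n^\iota$. The nodal state $\mathbf{U}_{ijk}$ determines nodal $\rho,\vec u,p,e$; $\mathbf{F}_\iota(\mathbf U)$ is $\mathbf f_\iota$ evaluated at nodes and $\mathbf{G}_\iota=\mathbf F_\iota(\mathbf U)-\nu_\iota\mathbf U$. Averages/jumps: for nodal pairs, $\{\{a\}\}_{(i,m)jk}=\frac12(a_{ijk}+a_{mjk})$ (analogously in $j$, $k$); at surface nodes, with "$-$" the own-element value and "$+$" the neighbor's value, $\{\{a\}\}=\frac12(a^++a^-)$, $[\![a]\!]=a^+-a^-$. Volume fluxes $\mathbf{G}^{\#}_\iota(\vec\nu_L,\vec\nu_R,\mathbf U_L,\mathbf U_R)\in\mathbb R^5$ are symmetric in exchanging $(\vec\nu_L,\mathbf U_L)\leftrightarrow(\vec\nu_R,\mathbf U_R)$ and consistent: $\mathbf G^{\#}_\iota(\vec\nu_L,\vec\nu_R,\mathbf U,\mathbf U)=\mathbf F_\iota(\mathbf U)-\{\{\nu_\iota\}\}\mathbf U$. Volume operator at node $ijk$: $\mathbb{D}\cdot\tilde{\mathbf G}^{\#}_{ijk}=\sum_{m=0}^N\sum_{\beta=1}^3\big[2\mathcal D_{im}\mathbf G^{\#}_\beta(\vec\nu_{ijk},\vec\nu_{mjk},\mathbf U_{ijk},\mathbf U_{mjk})\{\{\mathbb Ja^1_\beta\}\}_{(i,m)jk}+2\mathcal D_{jm}\mathbf G^{\#}_\beta(\vec\nu_{ijk},\vec\nu_{imk},\mathbf U_{ijk},\mathbf U_{imk})\{\{\mathbb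 Ja^2_\beta\}\}_{i(j,m)k}+2\mathcal D_{km}\mathbf G^{\#}_\beta(\vec\nu_{ijk},\vec\nu_{ijm},\mathbf U_{ijk},\mathbf U_{ijm})\{\{\mathbb Ja^3_\beta\}\}_{ij(k,m)}\big]$. Surface fluxes $\mathbf G^*_\iota$ are functions of interior/exterior states; $\tilde{\mathbf G}^*_{\hat n}=\hat s\sum_\iota n_\iota\mathbf G^*_\iota$ and $\tilde{\mathbf G}_{\hat n}=\sum_\iota\hat n^\iota\sum_\beta\mathbb Ja^\iota_\beta\mathbf G_\beta$. Scheme (per element): for all $\boldsymbol\varphi$ in the tensor-product polynomials of degree $N$ with values in $\mathbb R^5$, $\big\langle \frac{\partial(\mathcal J\mathbf U)}{\partial\tau},\boldsymbol\varphi\big\rangle_N=-\langle\mathbb D\cdot\tilde{\mathbf G}^{\#},\boldsymbol\varphi\rangle_N-\int_{\partial E,N}\boldsymbol\varphi^T(\tilde{\mathbf G}^*_{\hat n}-\tilde{\mathbf G}_{\hat n})\,dS,$ coupled with an evolution equation for $\mathcal J$ (discrete geometric conservation law) $\langle\partial_\tau\mathcal J,\varphi\rangle_N=\langle\mathbb D\cdot\tilde{\vec\nu}^{\#},\varphi\rangle_N+\int_{\partial E,N}\varphi(\tilde\nu^*_{\hat n}-\tilde\nu_{\hat n})dS$, whose precise form is not used in the claim. Here $\langle I^N(\Bbbk),\mathcal J\rangle_N=\sum_{ijk}\omega_{ijk}\Bbbk_{ijk}\mathcal J_{ijk}$. *)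

theory Defs
  imports "HOL-Analysis.Analysis" "HOL-Computational_Algebra.Polynomial"
begin

text \<open>The (N+1)-point Legendre-Gauss-Lobatto rule on [-1,1]: nodes ordered increasingly,
  containing both endpoints, exact for all polynomials of degree at most 2N-1.
  (These properties determine the LGL nodes and weights uniquely.)\<close>
definition lgl_quadrature :: "nat \<Rightarrow> (nat \<Rightarrow> real) \<Rightarrow> (nat \<Rightarrow> real) \<Rightarrow> bool" where
  "lgl_quadrature N \<xi> \<omega> \<longleftrightarrow>
     1 \<le> N \<and> \<xi> 0 = -1 \<and> \<xi> N = 1 \<and> (\<forall>i<N. \<xi> i < \<xi> (Suc i)) \<and>
     (\<forall>q :: real poly. degree q \<le> 2 * N - 1 \<longrightarrow>
        (\<Sum>i=0..N. \<omega> i * poly q (\<xi> i)) = integral {-1..1} (poly q))"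

definition lagrange_basis :: "nat \<Rightarrow> (nat \<Rightarrow> real) \<Rightarrow> nat \<Rightarrow> real poly" where
  "lagrange_basis N \<xi> j = (\<Prod>m\<in>{0..N} - {j}. smult (1 / (\<xi> j - \<xi> m)) [:- \<xi> m, 1:])"

definition dmat :: "nat \<Rightarrow> (nat \<Rightarrow> real) \<Rightarrow> nat \<Rightarrow> nat \<Rightarrow> real" where
  "dmat N \<xi> i j = poly (pderiv (lagrange_basis N \<xi> j)) (\<xi> i)"

text \<open>Nodal values of the derivative in direction xi^iota of the tensor-product interpolant
  of nodal data g.\<close>
definition dxi :: "nat \<Rightarrow> (nat \<Rightarrow> nat \<Rightarrow> real) \<Rightarrow> nat \<Rightarrow> (nat \<Rightarrow> nat \<Rightarrow> nat \<Rightarrow> real)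
                     \<Rightarrow> nat \<Rightarrow> nat \<Rightarrow> nat \<Rightarrow> real" where
  "dxi N D \<iota> g i j k =
     (if \<iota> = 1 then (\<Sum>m=0..N. D i m * g m j k)
      else if \<iota> = 2 then (\<Sum>m=0..N. D j m * g i m k)
      else (\<Sum>m=0..N. D k m * g i j m))"

text \<open>Weighted nodal sum: sum over i,j,k of omega_i omega_j omega_k h_ijk
  (the discrete inner product is this applied to the pointwise inner product).\<close>
definition wsum :: "nat \<Rightarrow> (nat \<Rightarrow> real) \<Rightarrow> (nat \<Rightarrow> nat \<Rightarrow> nat \<Rightarrow> real) \<Rightarrow> real" where
  "wsum N \<omega> h = (\<Sum>i=0..N. \<Sum>j=0..N. \<Sum>k=0..N. \<omega> i * \<omega> j * \<omega> k * h i j k)"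

definition rho :: "(nat \<Rightarrow> real) \<Rightarrow> real" where
  "rho U = U 1"

definition vel :: "(nat \<Rightarrow> real) \<Rightarrow> nat \<Rightarrow> real" where
  "vel U v = U (Suc v) / U 1"

definition pres :: "real \<Rightarrow> (nat \<Rightarrow> real) \<Rightarrow> real" where
  "pres \<gamma> U = (\<gamma> - 1) * (U 5 - rho U * (\<Sum>v=1..3. vel U v ^ 2) / 2)"

definition eint :: "real \<Rightarrow> (nat \<Rightarrow> real) \<Rightarrow> real" where
  "eint \<gamma> U = pres \<gamma> U / ((\<gamma> - 1) * rho U)"

definition kin :: "(nat \<Rightarrow> real) \<Rightarrow> real" where
  "kin U = rho U * (\<Sum>v=1..3. vel U v ^ 2) / 2"

definition flux :: "real \<Rightarrow> nat \<Rightarrow> (nat \<Rightarrow> real) \<Rightarrow> nat \<Rightarrow> real" where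
  "flux \<gamma> \<iota> U c =
     (if c = 1 then rho U * vel U \<iota>
      else if c \<in> {2, 3, 4} then rho U * vel U \<iota> * vel U (c - 1) + (if \<iota> = c - 1 then pres \<gamma> U else 0)
      else if c = 5 then rho U * vel U \<iota> * (eint \<gamma> U + (\<Sum>v=1..3. vel U v ^ 2) / 2) + pres \<gamma> U * vel U \<iota>
      else 0)"

text \<open>D . G~# at node ijk, component c.  Ja iota beta i j k are the nodal values of
  the contravariant component Ja^iota_beta, nu i j k the nodal grid velocity vector,
  U i j k the nodal state.\<close>
definition vol_op ::
  "nat \<Rightarrow> (nat \<Rightarrow> nat \<Rightarrow> real)
   \<Rightarrow> (nat \<Rightarrow> (nat \<Rightarrow> real) \<Rightarrow> (nat \<Rightarrow> real) \<Rightarrow> (nat \<Rightarrow> real) \<Rightarrow> (nat \<Rightarrow> real) \<Rightarrow> nat \<Rightarrow> real)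
   \<Rightarrow> (nat \<Rightarrow> nat \<Rightarrow> nat \<Rightarrow> nat \<Rightarrow> nat \<Rightarrow> real)
   \<Rightarrow> (nat \<Rightarrow> nat \<Rightarrow> nat \<Rightarrow> nat \<Rightarrow> real)
   \<Rightarrow> (nat \<Rightarrow> nat \<Rightarrow> nat \<Rightarrow> nat \<Rightarrow> real)
   \<Rightarrow> nat \<Rightarrow> nat \<Rightarrow> nat \<Rightarrow> nat \<Rightarrow> real" where
  "vol_op N D Gs Ja nu U i j k c =
     (\<Sum>m=0..N. \<Sum>\<beta>=1..3.
        2 * D i m * Gs \<beta> (nu i j k) (nu m j k) (U i j k) (U m j k) c
          * ((Ja 1 \<beta> i j k + Ja 1 \<beta> m j k) / 2)
      + 2 * D j m * Gs \<beta> (nu i j k) (nu i m k) (U i j k) (U i m k) c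
          * ((Ja 2 \<beta> i j k + Ja 2 \<beta> i m k) / 2)
      + 2 * D k m * Gs \<beta> (nu i j k) (nu i j m) (U i j k) (U i j m) c
          * ((Ja 3 \<beta> i j k + Ja 3 \<beta> i j m) / 2))"

text \<open>Face (kappa, sigma): kappa in {1,2,3} is the reference direction, sigma = True is the
  face xi^kappa = 1, sigma = False the face xi^kappa = -1.  Surface node (a,b) of that face
  (tangential indices in increasing direction order) is the volume node fnode.\<close>
definition fnode :: "nat \<Rightarrow> nat \<Rightarrow> bool \<Rightarrow> nat \<Rightarrow> nat \<Rightarrow> nat \<times> nat \<times> nat" where
  "fnode N \<kappa> \<sigma> a b =
     (let s = (if \<sigma> then N else 0) in
      if \<kappa> = 1 then (s, a, b) else if \<kappa> = 2 then (a, s, b) else (a, b, s))"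

definition nhat :: "nat \<Rightarrow> bool \<Rightarrow> nat \<Rightarrow> real" where
  "nhat \<kappa> \<sigma> \<iota> = (if \<iota> = \<kappa> then (if \<sigma> then 1 else -1) else 0)"

definition surf_int :: "nat \<Rightarrow> (nat \<Rightarrow> real) \<Rightarrow> (nat \<Rightarrow> bool \<Rightarrow> nat \<Rightarrow> nat \<Rightarrow> real) \<Rightarrow> real" where
  "surf_int N \<omega> h = (\<Sum>\<kappa>=1..3. \<Sum>\<sigma>\<in>(UNIV :: bool set). \<Sum>a=0..N. \<Sum>b=0..N. \<omega> a * \<omega> b * h \<kappa> \<sigma> a b)"

definition snvec :: "(nat \<Rightarrow> nat \<Rightarrow> real) \<Rightarrow> nat \<Rightarrow> bool \<Rightarrow> nat \<Rightarrow> real" where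
  "snvec JaN \<kappa> \<sigma> \<beta> = (\<Sum>\<iota>=1..3. JaN \<iota> \<beta> * nhat \<kappa> \<sigma> \<iota>)"

definition shat :: "(nat \<Rightarrow> nat \<Rightarrow> real) \<Rightarrow> nat \<Rightarrow> bool \<Rightarrow> real" where
  "shat JaN \<kappa> \<sigma> = sqrt (\<Sum>\<beta>=1..3. (snvec JaN \<kappa> \<sigma> \<beta>) ^ 2)"

definition nvec :: "(nat \<Rightarrow> nat \<Rightarrow> real) \<Rightarrow> nat \<Rightarrow> bool \<Rightarrow> nat \<Rightarrow> real" where
  "nvec JaN \<kappa> \<sigma> \<beta> = snvec JaN \<kappa> \<sigma> \<beta> / shat JaN \<kappa> \<sigma>"

definition surf_flux_contra ::
  "(nat \<Rightarrow> (nat \<Rightarrow> real) \<Rightarrow> (nat \<Rightarrow> real) \<Rightarrow> (nat \<Rightarrow> real) \<Rightarrow> nat \<Rightarrow> real)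
   \<Rightarrow> (nat \<Rightarrow> nat \<Rightarrow> real) \<Rightarrow> nat \<Rightarrow> bool \<Rightarrow> (nat \<Rightarrow> real) \<Rightarrow> (nat \<Rightarrow> real) \<Rightarrow> (nat \<Rightarrow> real)
   \<Rightarrow> nat \<Rightarrow> real" where
  "surf_flux_contra Gst JaN \<kappa> \<sigma> nu Um Up c =
     (\<Sum>\<iota>=1..3. shat JaN \<kappa> \<sigma> * nvec JaN \<kappa> \<sigma> \<iota> * Gst \<iota> nu Um Up c)"

definition flux_contra ::
  "real \<Rightarrow> (nat \<Rightarrow> nat \<Rightarrow> real) \<Rightarrow> nat \<Rightarrow> bool \<Rightarrow> (nat \<Rightarrow> real) \<Rightarrow> (nat \<Rightarrow> real) \<Rightarrow> nat \<Rightarrow> real" where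
  "flux_contra \<gamma> JaN \<kappa> \<sigma> nu Um c =
     (\<Sum>\<iota>=1..3. nhat \<kappa> \<sigma> \<iota> * (\<Sum>\<beta>=1..3. JaN \<iota> \<beta> * (flux \<gamma> \<beta> Um c - nu \<beta> * Um c)))"

definition ubar2 :: "(nat \<Rightarrow> real) \<Rightarrow> (nat \<Rightarrow> real) \<Rightarrow> real" where
  "ubar2 Um Up = (\<Sum>v=1..3. 2 * ((vel Um v + vel Up v) / 2) ^ 2 - (vel Um v ^ 2 + vel Up v ^ 2) / 2)"

end

theory Submission
  imports Defs
begin

text \<open>Test the scheme with the gradient of the kinetic energy with respect to the conservative
  variables: its left-hand side becomes the time derivative of the discrete kinetic energy. By
  Jameson's condition, this gradient applied to a two-point flux between states \<open>L\<close> and \<open>R\<close> in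
  direction \<open>\<iota>\<close> equals half the mass flux times \<open>u\<^sub>L \<cdot> u\<^sub>R\<close> plus \<open>u\<^sub>L\<close> in direction \<open>\<iota>\<close> times the
  averaged pressure. The first part is symmetric in \<open>L\<close> and \<open>R\<close>, so summation by parts for the LGL
  derivative matrix reduces its volume contribution to face values; by consistency these are the
  kinetic-energy fluxes of the interior state, and they cancel against the corresponding part of
  the surface term. Because the rows of the derivative matrix sum to zero, the pressure part of the
  volume term is the split form of the pressure work.\<close>

lemma sum_1_to_3: "(\<Sum>v=(1::nat)..3. f v) = f 1 + f 2 + (f 3 :: 'a::comm_monoid_add)"
  by (simp add: numeral_eq_Suc sum.atLeast_Suc_atMost add.assoc)

lemma sum_1_to_5: "(\<Sum>v=(1::nat)..5. f v) = f 1 + f 2 + f 3 + f 4 + (f 5 :: 'a::comm_monoid_add)"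
  by (simp add: numeral_eq_Suc sum.atLeast_Suc_atMost add.assoc)

lemma sum_swap3:
  "(\<Sum>i\<in>A. \<Sum>j\<in>B. \<Sum>k\<in>C. f i j k) = (\<Sum>j\<in>B. \<Sum>k\<in>C. \<Sum>i\<in>A. (f i j k :: 'a::comm_monoid_add))"
proof -
  have "(\<Sum>i\<in>A. \<Sum>j\<in>B. \<Sum>k\<in>C. f i j k) = (\<Sum>j\<in>B. \<Sum>i\<in>A. \<Sum>k\<in>C. f i j k)"
    by (rule sum.swap)
  also have "\<dots> = (\<Sum>j\<in>B. \<Sum>k\<in>C. \<Sum>i\<in>A. f i j k)"
    by (intro sum.cong refl sum.swap)
  finally show ?thesis .
qed

section \<open>Summation by parts for the LGL derivative matrix\<close>

lemma lgl_nodes_inj_on: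
  assumes "lgl_quadrature N \<xi> \<omega>"
  shows "inj_on \<xi> {0..N}"
proof -
  have less: "\<xi> i < \<xi> j" if "i < j" "j \<le> N" for i j
  proof (rule lift_Suc_mono_less_ivl[where N = "{..<N}"])
    show "\<And>n. n \<in> {..<N} \<Longrightarrow> \<xi> n < \<xi> (Suc n)"
      using assms by (simp add: lgl_quadrature_def)
  qed (use that in auto)
  show ?thesis
  proof (rule inj_onI)
    fix i j assume "i \<in> {0..N}" "j \<in> {0..N}" "\<xi> i = \<xi> j"
    then show "i = j" using less[of i j] less[of j i] by (cases i j rule: linorder_cases) auto
  qed
qed

lemma poly_lagrange_basis_node:
  assumes "inj_on \<xi> {0..N}" "i \<le> N" "j \<le> N"
  shows "poly (lagrange_basis N \<xi> j) (\<xi> i) = (if i = j then 1 else 0)"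
proof (cases "i = j")
  case True
  have "poly (lagrange_basis N \<xi> j) (\<xi> j) = 1"
    unfolding lagrange_basis_def poly_prod
  proof (rule prod.neutral, rule ballI)
    fix m assume "m \<in> {0..N} - {j}"
    then have "\<xi> j \<noteq> \<xi> m" using assms(1,3) by (auto dest: inj_onD)
    then show "poly (smult (1 / (\<xi> j - \<xi> m)) [:- \<xi> m, 1:]) (\<xi> j) = 1"
      by (simp add: diff_divide_distrib[symmetric])
  qed
  with True show ?thesis by simp
next
  case False
  with assms(2) have "i \<in> {0..N} - {j}" by simp
  with False show ?thesis
    unfolding lagrange_basis_def poly_prod by (auto intro!: prod_zero bexI[of _ i])
qed

lemma degree_lagrange_basis:
  assumes "j \<le> N"
  shows "degree (lagrange_basis N \<xi> j) \<le> N"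
proof -
  have "degree (lagrange_basis N \<xi> j)
      \<le> (\<Sum>m\<in>{0..N} - {j}. degree (smult (1 / (\<xi> j - \<xi> m)) [:- \<xi> m, 1:]))"
    unfolding lagrange_basis_def by (rule order.trans[OF degree_prod_sum_le]) (simp_all add: o_def)
  also have "\<dots> \<le> (\<Sum>m\<in>{0..N} - {j}. 1)"
    by (intro sum_mono order.trans[OF degree_smult_le]) simp
  also have "\<dots> = N" using assms by simp
  finally show ?thesis .
qed

lemma sum_lagrange_basis:
  assumes inj: "inj_on \<xi> {0..N}"
  shows "(\<Sum>j=0..N. lagrange_basis N \<xi> j) = 1"
proof (rule poly_eqI_degree[where A = "\<xi> ` {0..N}"])
  fix x assume "x \<in> \<xi> ` {0..N}"
  then obtain i where i: "i \<le> N" "x = \<xi> i" by auto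
  have "(\<Sum>j=0..N. poly (lagrange_basis N \<xi> j) (\<xi> i)) = (\<Sum>j=0..N. if i = j then 1 else 0)"
    using inj i by (intro sum.cong) (simp_all add: poly_lagrange_basis_node)
  with i show "poly (\<Sum>j=0..N. lagrange_basis N \<xi> j) x = poly 1 x" by (simp add: poly_sum)
next
  have card: "card (\<xi> ` {0..N}) = Suc N" using inj by (simp add: card_image)
  have "degree (\<Sum>j=0..N. lagrange_basis N \<xi> j) \<le> N"
    by (intro degree_sum_le) (simp_all add: degree_lagrange_basis)
  with card show "degree (\<Sum>j=0..N. lagrange_basis N \<xi> j) < card (\<xi> ` {0..N})" by simp
  from card show "degree (1 :: real poly) < card (\<xi> ` {0..N})" by simp
qed

lemma dmat_row_sum:
  assumes "inj_on \<xi> {0..N}"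
  shows "(\<Sum>m=0..N. dmat N \<xi> i m) = 0"
proof -
  have "(\<Sum>m=0..N. dmat N \<xi> i m) = poly (pderiv (\<Sum>m=0..N. lagrange_basis N \<xi> m)) (\<xi> i)"
    by (simp add: dmat_def higher_pderiv_sum[of 1, simplified] poly_sum)
  with sum_lagrange_basis[OF assms] show ?thesis by simp
qed

lemma integral_poly_pderiv:
  "integral {-1..1} (poly (pderiv p)) = poly p 1 - poly (p :: real poly) (-1)"
proof -
  have "(poly (pderiv p) has_integral (poly p 1 - poly p (-1))) {-1..1}"
    by (rule fundamental_theorem_of_calculus)
       (auto simp: has_real_derivative_iff_has_vector_derivative[symmetric]
             intro: DERIV_subset[OF poly_DERIV])
  then show ?thesis by (rule integral_unique)
qed

text \<open>The SBP property \<open>Q + Q\<^sup>T = B\<close> of \<open>Q = diag \<omega> \<cdot> D\<close> with \<open>B = diag(-1, 0, \<dots>, 0, 1)\<close>,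
  together with exactness of \<open>D\<close> on constants.\<close>
definition sbp_operator :: "nat \<Rightarrow> (nat \<Rightarrow> real) \<Rightarrow> (nat \<Rightarrow> nat \<Rightarrow> real) \<Rightarrow> bool" where
  "sbp_operator N \<omega> D \<longleftrightarrow>
     (\<forall>i\<le>N. \<forall>m\<le>N. \<omega> i * D i m + \<omega> m * D m i
        = (if i = N \<and> m = N then 1 else 0) - (if i = 0 \<and> m = 0 then 1 else 0))
   \<and> (\<forall>i\<le>N. (\<Sum>m=0..N. D i m) = 0)"

lemma sbp_operator_dmat:
  assumes quad: "lgl_quadrature N \<xi> \<omega>"
  shows "sbp_operator N \<omega> (dmat N \<xi>)"
proof -
  have inj: "inj_on \<xi> {0..N}" using quad by (rule lgl_nodes_inj_on)
  have node: "poly (lagrange_basis N \<xi> j) (\<xi> n) = (if n = j then 1 else 0)"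
    if "n \<le> N" "j \<le> N" for n j
    using inj that by (rule poly_lagrange_basis_node)
  have "\<omega> i * dmat N \<xi> i m + \<omega> m * dmat N \<xi> m i
        = (if i = N \<and> m = N then 1 else 0) - (if i = 0 \<and> m = 0 then 1 else 0)"
    if "i \<le> N" "m \<le> N" for i m
  proof -
    \<comment> \<open>\<open>(\<ell>\<^sub>i \<ell>\<^sub>m)'\<close> has degree \<open>2N - 1\<close>, so the LGL rule integrates it exactly.\<close>
    define P where "P = lagrange_basis N \<xi> i * lagrange_basis N \<xi> m"
    have "degree P \<le> 2 * N"
      unfolding P_def using degree_mult_le[of "lagrange_basis N \<xi> i" "lagrange_basis N \<xi> m"]
        degree_lagrange_basis[of i N \<xi>] degree_lagrange_basis[of m N \<xi>] that by linarith
    then have exact: "degree (pderiv P) \<le> 2 * N - 1" by (simp add: degree_pderiv)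
    have "\<omega> i * dmat N \<xi> i m + \<omega> m * dmat N \<xi> m i
        = (\<Sum>n=0..N. (if n = i then \<omega> n * dmat N \<xi> n m else 0)
                   + (if n = m then \<omega> n * dmat N \<xi> n i else 0))"
      using that by (simp add: sum.distrib)
    also have "\<dots> = (\<Sum>n=0..N. \<omega> n * poly (pderiv P) (\<xi> n))"
      using that by (intro sum.cong) (auto simp: P_def pderiv_mult dmat_def node algebra_simps)
    also have "\<dots> = integral {-1..1} (poly (pderiv P))"
      using quad exact by (simp add: lgl_quadrature_def)
    also have "\<dots> = poly P (\<xi> N) - poly P (\<xi> 0)"
      using quad by (simp add: integral_poly_pderiv lgl_quadrature_def)
    also have "\<dots> = (if i = N \<and> m = N then 1 else 0) - (if i = 0 \<and> m = 0 then 1 else 0)"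
      using that by (simp add: P_def poly_mult node)
    finally show ?thesis .
  qed
  with dmat_row_sum[OF inj] show ?thesis unfolding sbp_operator_def by blast
qed

lemma sbp_symmetric_double_sum:
  fixes S :: "nat \<Rightarrow> nat \<Rightarrow> real"
  assumes D: "sbp_operator N \<omega> D" and sym: "\<And>i m. i \<le> N \<Longrightarrow> m \<le> N \<Longrightarrow> S i m = S m i"
  shows "(\<Sum>i=0..N. \<Sum>m=0..N. \<omega> i * D i m * S i m) = (S N N - S 0 0) / 2"
proof -
  let ?X = "\<Sum>i=0..N. \<Sum>m=0..N. \<omega> i * D i m * S i m"
  have swap: "?X = (\<Sum>i=0..N. \<Sum>m=0..N. \<omega> m * D m i * S i m)"
    by (subst sum.swap) (intro sum.cong refl, simp add: sym)
  have delta: "\<And>P Q x. (if P \<and> Q then 1 else 0) * x = (if Q then if P then x else 0 else (0::real))"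
    by simp
  have "2 * ?X = ?X + (\<Sum>i=0..N. \<Sum>m=0..N. \<omega> m * D m i * S i m)"
    using swap by simp
  also have "\<dots> = (\<Sum>i=0..N. \<Sum>m=0..N. (\<omega> i * D i m + \<omega> m * D m i) * S i m)"
    by (simp add: sum.distrib distrib_right)
  also have "\<dots> = (\<Sum>i=0..N. \<Sum>m=0..N.
      ((if i = N \<and> m = N then 1 else 0) - (if i = 0 \<and> m = 0 then 1 else 0)) * S i m)"
    using D by (intro sum.cong refl) (simp add: sbp_operator_def)
  also have "\<dots> = S N N - S 0 0"
    by (simp only: left_diff_distrib sum_subtractf delta) simp
  finally show ?thesis by simp
qed

lemma wsum_sbp_two_point:
  fixes F :: "nat \<Rightarrow> nat \<Rightarrow> nat \<Rightarrow> nat \<Rightarrow> real"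
  assumes D: "sbp_operator N \<omega> D"
    and sym: "\<And>i m j k. i \<le> N \<Longrightarrow> m \<le> N \<Longrightarrow> j \<le> N \<Longrightarrow> k \<le> N \<Longrightarrow> F i m j k = F m i j k"
  shows "wsum N \<omega> (\<lambda>i j k. \<Sum>m=0..N. 2 * D i m * F i m j k)
           = (\<Sum>j=0..N. \<Sum>k=0..N. \<omega> j * \<omega> k * (F N N j k - F 0 0 j k))"
    and "wsum N \<omega> (\<lambda>i j k. \<Sum>m=0..N. 2 * D j m * F j m i k)
           = (\<Sum>i=0..N. \<Sum>k=0..N. \<omega> i * \<omega> k * (F N N i k - F 0 0 i k))"
    and "wsum N \<omega> (\<lambda>i j k. \<Sum>m=0..N. 2 * D k m * F k m i j)
           = (\<Sum>i=0..N. \<Sum>j=0..N. \<omega> i * \<omega> j * (F N N i j - F 0 0 i j))"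
proof -
  have telescope: "(\<Sum>a=0..N. \<Sum>b=0..N. \<Sum>c=0..N. \<omega> a * \<omega> b * \<omega> c * (\<Sum>m=0..N. 2 * D a m * F a m b c))
      = (\<Sum>b=0..N. \<Sum>c=0..N. \<omega> b * \<omega> c * (F N N b c - F 0 0 b c))"
  proof -
    have "(\<Sum>a=0..N. \<Sum>b=0..N. \<Sum>c=0..N. \<omega> a * \<omega> b * \<omega> c * (\<Sum>m=0..N. 2 * D a m * F a m b c))
        = (\<Sum>b=0..N. \<Sum>c=0..N. \<omega> b * \<omega> c * (2 * (\<Sum>a=0..N. \<Sum>m=0..N. \<omega> a * D a m * F a m b c)))"
      by (subst sum_swap3) (simp add: sum_distrib_left mult_ac)
    also have "\<dots> = (\<Sum>b=0..N. \<Sum>c=0..N. \<omega> b * \<omega> c * (F N N b c - F 0 0 b c))"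
      by (intro sum.cong refl) (subst sbp_symmetric_double_sum[OF D], auto intro: sym)
    finally show ?thesis .
  qed
  then show "wsum N \<omega> (\<lambda>i j k. \<Sum>m=0..N. 2 * D i m * F i m j k)
      = (\<Sum>j=0..N. \<Sum>k=0..N. \<omega> j * \<omega> k * (F N N j k - F 0 0 j k))"
    unfolding wsum_def .
  have "wsum N \<omega> (\<lambda>i j k. \<Sum>m=0..N. 2 * D j m * F j m i k)
      = (\<Sum>j=0..N. \<Sum>i=0..N. \<Sum>k=0..N. \<omega> j * \<omega> i * \<omega> k * (\<Sum>m=0..N. 2 * D j m * F j m i k))"
    unfolding wsum_def by (subst sum.swap) (simp add: mult_ac)
  also have "\<dots> = (\<Sum>i=0..N. \<Sum>k=0..N. \<omega> i * \<omega> k * (F N N i k - F 0 0 i k))"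
    by (rule telescope)
  finally show "wsum N \<omega> (\<lambda>i j k. \<Sum>m=0..N. 2 * D j m * F j m i k)
      = (\<Sum>i=0..N. \<Sum>k=0..N. \<omega> i * \<omega> k * (F N N i k - F 0 0 i k))" .
  have "wsum N \<omega> (\<lambda>i j k. \<Sum>m=0..N. 2 * D k m * F k m i j)
      = (\<Sum>k=0..N. \<Sum>i=0..N. \<Sum>j=0..N. \<omega> k * \<omega> i * \<omega> j * (\<Sum>m=0..N. 2 * D k m * F k m i j))"
    unfolding wsum_def by (subst sum_swap3[symmetric]) (simp add: mult_ac)
  also have "\<dots> = (\<Sum>i=0..N. \<Sum>j=0..N. \<omega> i * \<omega> j * (F N N i j - F 0 0 i j))"
    by (rule telescope)
  finally show "wsum N \<omega> (\<lambda>i j k. \<Sum>m=0..N. 2 * D k m * F k m i j)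
      = (\<Sum>i=0..N. \<Sum>j=0..N. \<omega> i * \<omega> j * (F N N i j - F 0 0 i j))" .
qed

lemma two_point_product_split_form:
  fixes D :: "nat \<Rightarrow> nat \<Rightarrow> real"
  assumes "(\<Sum>m=0..N. D i m) = 0"
  shows "(\<Sum>m=0..N. 2 * D i m * ((P i + P m) / 2) * ((A i + A m) / 2))
     = (1/2) * ((\<Sum>m=0..N. D i m * P m) * A i + P i * (\<Sum>m=0..N. D i m * A m)
                + (\<Sum>m=0..N. D i m * (P m * A m)))"
proof -
  have "(\<Sum>m=0..N. 2 * D i m * ((P i + P m) / 2) * ((A i + A m) / 2))
      = (\<Sum>m=0..N. (1/2) * (P i * A i * D i m) + (1/2) * (D i m * P m * A i)
                   + (1/2) * (P i * (D i m * A m)) + (1/2) * (D i m * (P m * A m)))"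
    by (intro sum.cong refl) (simp add: field_simps)
  also have "\<dots> = (1/2) * (P i * A i * (\<Sum>m=0..N. D i m)) + (1/2) * ((\<Sum>m=0..N. D i m * P m) * A i)
      + (1/2) * (P i * (\<Sum>m=0..N. D i m * A m)) + (1/2) * (\<Sum>m=0..N. D i m * (P m * A m))"
    by (simp only: sum.distrib sum_distrib_left sum_distrib_right)
  finally show ?thesis using assms by (simp add: algebra_simps)
qed

lemma wsum_cong:
  "(\<And>i j k. i \<le> N \<Longrightarrow> j \<le> N \<Longrightarrow> k \<le> N \<Longrightarrow> f i j k = g i j k) \<Longrightarrow> wsum N \<omega> f = wsum N \<omega> g"
  unfolding wsum_def by (intro sum.cong refl) auto

lemma wsum_add: "wsum N \<omega> (\<lambda>i j k. f i j k + g i j k) = wsum N \<omega> f + wsum N \<omega> g"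
  by (simp add: wsum_def sum.distrib algebra_simps)

lemma wsum_cmult: "wsum N \<omega> (\<lambda>i j k. c * f i j k) = c * wsum N \<omega> f"
  by (simp add: wsum_def sum_distrib_left mult_ac)

lemma wsum_sum: "wsum N \<omega> (\<lambda>i j k. \<Sum>\<iota>\<in>S. f \<iota> i j k) = (\<Sum>\<iota>\<in>S. wsum N \<omega> (f \<iota>))"
  unfolding wsum_def by (simp add: sum_distrib_left sum.swap[of _ S])

lemma surf_int_cong:
  "(\<And>\<kappa> \<sigma> a b. \<kappa> \<in> {1..3} \<Longrightarrow> a \<le> N \<Longrightarrow> b \<le> N \<Longrightarrow> f \<kappa> \<sigma> a b = g \<kappa> \<sigma> a b)
   \<Longrightarrow> surf_int N \<omega> f = surf_int N \<omega> g"
  unfolding surf_int_def by (intro sum.cong refl) auto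

lemma surf_int_diff:
  "surf_int N \<omega> (\<lambda>\<kappa> \<sigma> a b. f \<kappa> \<sigma> a b - g \<kappa> \<sigma> a b) = surf_int N \<omega> f - surf_int N \<omega> g"
  by (simp add: surf_int_def sum_subtractf algebra_simps)

lemma surf_int_sum:
  "surf_int N \<omega> (\<lambda>\<kappa> \<sigma> a b. \<Sum>\<iota>\<in>S. f \<iota> \<kappa> \<sigma> a b) = (\<Sum>\<iota>\<in>S. surf_int N \<omega> (f \<iota>))"
  unfolding surf_int_def by (simp add: sum_distrib_left sum.swap[of _ S])

lemma fnode_le:
  assumes "a \<le> N" "b \<le> N" "fnode N \<kappa> \<sigma> a b = (i, j, k)"
  shows "i \<le> N" "j \<le> N" "k \<le> N"
  using assms by (auto simp: fnode_def Let_def split: if_splits)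

lemma surf_int_nhat:
  "surf_int N \<omega> (\<lambda>\<kappa> \<sigma> a b. case fnode N \<kappa> \<sigma> a b of (i, j, k) \<Rightarrow> \<Sum>\<iota>=1..3. nhat \<kappa> \<sigma> \<iota> * g \<iota> i j k)
   = (\<Sum>j=0..N. \<Sum>k=0..N. \<omega> j * \<omega> k * (g 1 N j k - g 1 0 j k))
   + (\<Sum>i=0..N. \<Sum>k=0..N. \<omega> i * \<omega> k * (g 2 i N k - g 2 i 0 k))
   + (\<Sum>i=0..N. \<Sum>j=0..N. \<omega> i * \<omega> j * (g 3 i j N - g 3 i j 0))"
  unfolding surf_int_def sum_1_to_3 UNIV_bool
  by (simp add: fnode_def nhat_def right_diff_distrib sum_subtractf sum.distrib sum_negf)

section \<open>Kinetic energy\<close>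

definition vel_dot :: "(nat \<Rightarrow> real) \<Rightarrow> (nat \<Rightarrow> real) \<Rightarrow> real" where
  "vel_dot V W = (\<Sum>v=1..3. vel V v * vel W v)"

text \<open>For \<open>\<rho> > 0\<close> this is the gradient of \<open>kin\<close> with respect to the conservative variables.\<close>
definition kin_grad :: "(nat \<Rightarrow> real) \<Rightarrow> nat \<Rightarrow> real" where
  "kin_grad V c = (if c = 1 then - vel_dot V V / 2 else if c \<in> {2, 3, 4} then vel V (c - 1) else 0)"

definition kin_flux :: "(nat \<Rightarrow> real) \<Rightarrow> (nat \<Rightarrow> real) \<Rightarrow> nat \<Rightarrow> real" where
  "kin_flux n V \<beta> = kin V * (vel V \<beta> - n \<beta>)"

lemma vel_dot_commute: "vel_dot V W = vel_dot W V"
  by (simp add: vel_dot_def mult.commute)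

lemma vel_dot_self: "vel_dot V V = (\<Sum>v=1..3. vel V v ^ 2)"
  by (simp add: vel_dot_def power2_eq_square)

lemma ubar2_eq_vel_dot: "ubar2 Um Up = vel_dot Um Up"
  unfolding ubar2_def vel_dot_def by (intro sum.cong refl) (simp add: power2_eq_square field_simps)

lemma sum_kin_grad:
  "(\<Sum>c=1..5. kin_grad V c * g c) = (\<Sum>v=1..3. vel V v * g (v + 1)) - vel_dot V V / 2 * g 1"
  unfolding sum_1_to_5 sum_1_to_3 by (simp add: kin_grad_def numeral_eq_Suc)

lemma kin_grad_jameson:
  assumes "\<iota> \<in> {1..3}"
    and G: "\<And>v. v \<in> {1..3} \<Longrightarrow> G (v + 1) = G 1 * ((vel V v + vel W v) / 2) + (if \<iota> = v then P else 0)"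
  shows "(\<Sum>c=1..5. kin_grad V c * G c) = G 1 * vel_dot V W / 2 + vel V \<iota> * P"
proof -
  have "(\<Sum>v=1..3. vel V v * G (v + 1))
      = (\<Sum>v=1..3. G 1 * (vel V v * vel V v + vel V v * vel W v) / 2 + (if v = \<iota> then vel V \<iota> * P else 0))"
  proof (rule sum.cong[OF refl])
    fix v :: nat assume "v \<in> {1..3}"
    then show "vel V v * G (v + 1)
        = G 1 * (vel V v * vel V v + vel V v * vel W v) / 2 + (if v = \<iota> then vel V \<iota> * P else 0)"
      using G[of v] by (auto simp: algebra_simps)
  qed
  also have "\<dots> = G 1 * (vel_dot V V + vel_dot V W) / 2 + vel V \<iota> * P"
    using assms(1) by (simp add: sum.distrib vel_dot_def sum_distrib_left[symmetric] sum_divide_distrib[symmetric])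
  finally show ?thesis unfolding sum_kin_grad by (simp add: field_simps)
qed

text \<open>The exact flux satisfies Jameson's condition, with the mass flux relative to the grid.\<close>
lemma kin_grad_flux:
  assumes "rho V > 0" "\<beta> \<in> {1..3}"
  shows "(\<Sum>c=1..5. kin_grad V c * (flux \<gamma> \<beta> V c - n \<beta> * V c)) = kin_flux n V \<beta> + pres \<gamma> V * vel V \<beta>"
proof -
  have "(\<Sum>c=1..5. kin_grad V c * (flux \<gamma> \<beta> V c - n \<beta> * V c))
      = (flux \<gamma> \<beta> V 1 - n \<beta> * V 1) * vel_dot V V / 2 + vel V \<beta> * pres \<gamma> V"
  proof (rule kin_grad_jameson[OF assms(2)])
    fix v :: nat assume "v \<in> {1..3}"
    then have "v = 1 \<or> v = 2 \<or> v = 3" by auto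
    then show "flux \<gamma> \<beta> V (v + 1) - n \<beta> * V (v + 1)
        = (flux \<gamma> \<beta> V 1 - n \<beta> * V 1) * ((vel V v + vel V v) / 2) + (if \<beta> = v then pres \<gamma> V else 0)"
      using assms(1) by (auto simp: flux_def rho_def vel_def field_simps)
  qed
  then show ?thesis
    by (simp add: kin_flux_def kin_def vel_dot_self flux_def rho_def algebra_simps)
qed

lemma shat_mult_nvec:
  assumes "\<beta> \<in> {1..3}"
  shows "shat JaN \<kappa> \<sigma> * nvec JaN \<kappa> \<sigma> \<beta> = snvec JaN \<kappa> \<sigma> \<beta>"
proof (cases "shat JaN \<kappa> \<sigma> = 0")
  case True
  \<comment> \<open>Then \<open>nvec\<close> is a division by zero, but all components of \<open>snvec\<close> vanish as well.\<close>
  then have "(\<Sum>\<beta>=1..3. snvec JaN \<kappa> \<sigma> \<beta> ^ 2) = 0"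
    unfolding shat_def by simp
  then have "\<forall>\<beta>\<in>{1..3}. snvec JaN \<kappa> \<sigma> \<beta> ^ 2 = 0"
    by (subst (asm) sum_nonneg_eq_0_iff) auto
  with True assms show ?thesis by simp
next
  case False
  then show ?thesis by (simp add: nvec_def)
qed

lemma kin_mult_has_derivative:
  fixes V :: "real \<Rightarrow> nat \<Rightarrow> real" and g :: "real \<Rightarrow> real"
  assumes V: "\<And>c. (\<lambda>s. V s c) differentiable (at \<tau>)" and g: "g differentiable (at \<tau>)"
    and pos: "rho (V \<tau>) > 0"
  shows "((\<lambda>s. kin (V s) * g s) has_real_derivative
           (\<Sum>c=1..5. kin_grad (V \<tau>) c * deriv (\<lambda>s. g s * V s c) \<tau>)) (at \<tau>)"
proof -
  have dV: "((\<lambda>s. V s c) has_real_derivative deriv (\<lambda>s. V s c) \<tau>) (at \<tau>)" for c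
    using V DERIV_deriv_iff_real_differentiable by blast
  have dg: "(g has_real_derivative deriv g \<tau>) (at \<tau>)"
    using g DERIV_deriv_iff_real_differentiable by blast
  have product: "deriv (\<lambda>s. g s * V s c) \<tau> = deriv g \<tau> * V \<tau> c + g \<tau> * deriv (\<lambda>s. V s c) \<tau>" for c
    using DERIV_imp_deriv[OF DERIV_mult[OF dg dV[of c]]] by (simp add: algebra_simps)
  have ne: "V \<tau> 1 \<noteq> 0" "V \<tau> (Suc 0) \<noteq> 0" using pos by (simp_all add: rho_def)
  have kin: "kin (V s) = (V s 2 ^ 2 + V s 3 ^ 2 + V s 4 ^ 2) / (2 * V s 1)" for s
    by (cases "V s 1 = 0")
       (simp_all add: kin_def rho_def vel_def sum_1_to_3 field_simps power2_eq_square numeral_eq_Suc)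
  show ?thesis
    unfolding kin
    by (rule DERIV_cong, (rule derivative_eq_intros dV dg refl | simp add: ne)+)
       (simp add: sum_kin_grad product kin_grad_def vel_dot_def vel_def sum_1_to_3 field_simps
          power2_eq_square numeral_eq_Suc)
qed

lemma wsum_kin_has_derivative:
  fixes U :: "real \<Rightarrow> nat \<Rightarrow> nat \<Rightarrow> nat \<Rightarrow> nat \<Rightarrow> real" and J :: "real \<Rightarrow> nat \<Rightarrow> nat \<Rightarrow> nat \<Rightarrow> real"
  assumes "\<And>i j k c. (\<lambda>s. U s i j k c) differentiable (at \<tau>)"
    and "\<And>i j k. (\<lambda>s. J s i j k) differentiable (at \<tau>)"
    and "\<And>i j k. i \<le> N \<Longrightarrow> j \<le> N \<Longrightarrow> k \<le> N \<Longrightarrow> rho (U \<tau> i j k) > 0"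
  shows "((\<lambda>s. wsum N \<omega> (\<lambda>i j k. kin (U s i j k) * J s i j k)) has_real_derivative
           wsum N \<omega> (\<lambda>i j k. \<Sum>c=1..5. kin_grad (U \<tau> i j k) c * deriv (\<lambda>s. J s i j k * U s i j k c) \<tau>))
         (at \<tau>)"
  unfolding wsum_def using assms by (intro DERIV_sum DERIV_cmult kin_mult_has_derivative) auto

section \<open>The volume term\<close>

lemma dxi_directions:
  "dxi N D 1 g i j k = (\<Sum>m=0..N. D i m * g m j k)"
  "dxi N D 2 g i j k = (\<Sum>m=0..N. D j m * g i m k)"
  "dxi N D 3 g i j k = (\<Sum>m=0..N. D k m * g i j m)"
  by (simp_all add: dxi_def)

lemma kin_grad_two_point_sum:
  fixes G :: "nat \<Rightarrow> nat \<Rightarrow> nat \<Rightarrow> real" and d p :: "nat \<Rightarrow> real" and a :: "nat \<Rightarrow> nat \<Rightarrow> real"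
  assumes "\<And>\<beta> m. \<beta> \<in> {1..3} \<Longrightarrow> m \<in> M \<Longrightarrow>
      (\<Sum>c=1..5. kin_grad V c * G \<beta> m c) = G \<beta> m 1 * vel_dot V (W m) / 2 + vel V \<beta> * p m"
  shows "(\<Sum>c=1..5. kin_grad V c * (\<Sum>m\<in>M. \<Sum>\<beta>=1..3. 2 * d m * G \<beta> m c * a \<beta> m))
       = (\<Sum>m\<in>M. 2 * d m * (\<Sum>\<beta>=1..3. G \<beta> m 1 * vel_dot V (W m) / 2 * a \<beta> m))
       + (\<Sum>\<beta>=1..3. vel V \<beta> * (\<Sum>m\<in>M. 2 * d m * p m * a \<beta> m))"
proof -
  have "(\<Sum>c=1..5. kin_grad V c * (\<Sum>m\<in>M. \<Sum>\<beta>=1..3. 2 * d m * G \<beta> m c * a \<beta> m))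
      = (\<Sum>m\<in>M. \<Sum>\<beta>=1..3. 2 * d m * a \<beta> m * (\<Sum>c=1..5. kin_grad V c * G \<beta> m c))"
    by (simp only: sum_distrib_left) (subst sum_swap3, simp add: mult_ac)
  also have "\<dots> = (\<Sum>m\<in>M. \<Sum>\<beta>=1..3. 2 * d m * a \<beta> m * (G \<beta> m 1 * vel_dot V (W m) / 2 + vel V \<beta> * p m))"
    using assms by (intro sum.cong refl) simp
  also have "\<dots> = (\<Sum>m\<in>M. 2 * d m * (\<Sum>\<beta>=1..3. G \<beta> m 1 * vel_dot V (W m) / 2 * a \<beta> m))
       + (\<Sum>\<beta>=1..3. vel V \<beta> * (\<Sum>m\<in>M. 2 * d m * p m * a \<beta> m))"
    by (simp add: distrib_left sum.distrib sum_distrib_left mult_ac sum.swap[of _ M])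
  finally show ?thesis .
qed

text \<open>The part of the contracted two-point flux in direction \<open>\<iota>\<close> that is symmetric in the
  two nodes; by summation by parts it only contributes on the faces.\<close>
definition kin_pair_flux ::
  "(nat \<Rightarrow> (nat \<Rightarrow> real) \<Rightarrow> (nat \<Rightarrow> real) \<Rightarrow> (nat \<Rightarrow> real) \<Rightarrow> (nat \<Rightarrow> real) \<Rightarrow> nat \<Rightarrow> real)
   \<Rightarrow> (nat \<Rightarrow> nat \<Rightarrow> nat \<Rightarrow> nat \<Rightarrow> nat \<Rightarrow> real) \<Rightarrow> (nat \<Rightarrow> nat \<Rightarrow> nat \<Rightarrow> nat \<Rightarrow> real)
   \<Rightarrow> (nat \<Rightarrow> nat \<Rightarrow> nat \<Rightarrow> nat \<Rightarrow> real) \<Rightarrow> nat \<Rightarrow> nat \<Rightarrow> nat \<Rightarrow> nat \<Rightarrow> nat \<Rightarrow> nat \<Rightarrow> nat \<Rightarrow> real"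
  where
  "kin_pair_flux Gs Ja nu U \<iota> i j k i' j' k' =
     (\<Sum>\<beta>=1..3. Gs \<beta> (nu i j k) (nu i' j' k') (U i j k) (U i' j' k') 1
                  * vel_dot (U i j k) (U i' j' k') / 2 * ((Ja \<iota> \<beta> i j k + Ja \<iota> \<beta> i' j' k') / 2))"

lemma kin_pair_flux_commute:
  assumes "\<And>\<iota> nL nR UL UR. \<iota> \<in> {1..3} \<Longrightarrow> rho UL > 0 \<Longrightarrow> rho UR > 0 \<Longrightarrow>
      Gs \<iota> nL nR UL UR 1 = Gs \<iota> nR nL UR UL 1"
    and "rho (U i j k) > 0" "rho (U i' j' k') > 0"
  shows "kin_pair_flux Gs Ja nu U \<iota> i j k i' j' k' = kin_pair_flux Gs Ja nu U \<iota> i' j' k' i j k"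
  unfolding kin_pair_flux_def using assms
  by (intro sum.cong refl) (simp add: vel_dot_commute add.commute)

lemma kin_pair_flux_self:
  assumes "\<And>\<iota> n V. \<iota> \<in> {1..3} \<Longrightarrow> rho V > 0 \<Longrightarrow> Gs \<iota> n n V V 1 = rho V * (vel V \<iota> - n \<iota>)"
    and "rho (U i j k) > 0"
  shows "kin_pair_flux Gs Ja nu U \<iota> i j k i j k
       = (\<Sum>\<beta>=1..3. Ja \<iota> \<beta> i j k * kin_flux (nu i j k) (U i j k) \<beta>)"
  unfolding kin_pair_flux_def using assms
  by (intro sum.cong refl) (simp add: kin_flux_def kin_def vel_dot_self)

lemma two_point_sums_split_form:
  fixes D :: "nat \<Rightarrow> nat \<Rightarrow> real" and P :: "nat \<Rightarrow> nat \<Rightarrow> nat \<Rightarrow> real"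
    and A :: "nat \<Rightarrow> nat \<Rightarrow> nat \<Rightarrow> nat \<Rightarrow> nat \<Rightarrow> real" and w :: "nat \<Rightarrow> real"
  assumes rows: "\<And>i. i \<le> N \<Longrightarrow> (\<Sum>m=0..N. D i m) = 0" and ijk: "i \<le> N" "j \<le> N" "k \<le> N"
  shows "(\<Sum>\<beta>=1..3. w \<beta> * (\<Sum>m=0..N. 2 * D i m * ((P i j k + P m j k) / 2) * ((A 1 \<beta> i j k + A 1 \<beta> m j k) / 2)))
       + (\<Sum>\<beta>=1..3. w \<beta> * (\<Sum>m=0..N. 2 * D j m * ((P i j k + P i m k) / 2) * ((A 2 \<beta> i j k + A 2 \<beta> i m k) / 2)))
       + (\<Sum>\<beta>=1..3. w \<beta> * (\<Sum>m=0..N. 2 * D k m * ((P i j k + P i j m) / 2) * ((A 3 \<beta> i j k + A 3 \<beta> i j m) / 2)))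
     = (1 / 2) * (\<Sum>\<iota>=1..3. \<Sum>\<beta>=1..3.
         (dxi N D \<iota> P i j k * A \<iota> \<beta> i j k + P i j k * dxi N D \<iota> (\<lambda>i' j' k'. A \<iota> \<beta> i' j' k') i j k
          + dxi N D \<iota> (\<lambda>i' j' k'. P i' j' k' * A \<iota> \<beta> i' j' k') i j k) * w \<beta>)"
proof -
  have "(\<Sum>m=0..N. 2 * D i m * ((P i j k + P m j k) / 2) * ((A 1 \<beta> i j k + A 1 \<beta> m j k) / 2))
      = (1 / 2) * (dxi N D 1 P i j k * A 1 \<beta> i j k + P i j k * dxi N D 1 (\<lambda>i' j' k'. A 1 \<beta> i' j' k') i j k
                   + dxi N D 1 (\<lambda>i' j' k'. P i' j' k' * A 1 \<beta> i' j' k') i j k)" for \<beta>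
    unfolding dxi_directions
    by (rule two_point_product_split_form[where D = D and i = i and P = "\<lambda>m. P m j k",
          OF rows[OF ijk(1)]])
  moreover have "(\<Sum>m=0..N. 2 * D j m * ((P i j k + P i m k) / 2) * ((A 2 \<beta> i j k + A 2 \<beta> i m k) / 2))
      = (1 / 2) * (dxi N D 2 P i j k * A 2 \<beta> i j k + P i j k * dxi N D 2 (\<lambda>i' j' k'. A 2 \<beta> i' j' k') i j k
                   + dxi N D 2 (\<lambda>i' j' k'. P i' j' k' * A 2 \<beta> i' j' k') i j k)" for \<beta>
    unfolding dxi_directions
    by (rule two_point_product_split_form[where D = D and i = j and P = "\<lambda>m. P i m k",
          OF rows[OF ijk(2)]])
  moreover have "(\<Sum>m=0..N. 2 * D k m * ((P i j k + P i j m) / 2) * ((A 3 \<beta> i j k + A 3 \<beta> i j m) / 2))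
      = (1 / 2) * (dxi N D 3 P i j k * A 3 \<beta> i j k + P i j k * dxi N D 3 (\<lambda>i' j' k'. A 3 \<beta> i' j' k') i j k
                   + dxi N D 3 (\<lambda>i' j' k'. P i' j' k' * A 3 \<beta> i' j' k') i j k)" for \<beta>
    unfolding dxi_directions
    by (rule two_point_product_split_form[where D = D and i = k and P = "\<lambda>m. P i j m",
          OF rows[OF ijk(3)]])
  ultimately show ?thesis
    by (simp only:) (unfold sum_1_to_3, simp add: algebra_simps)
qed

lemma kin_grad_vol_op:
  fixes D :: "nat \<Rightarrow> nat \<Rightarrow> real" and U :: "nat \<Rightarrow> nat \<Rightarrow> nat \<Rightarrow> nat \<Rightarrow> real"
  assumes rows: "\<And>i. i \<le> N \<Longrightarrow> (\<Sum>m=0..N. D i m) = 0"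
    and pos: "\<And>i j k. i \<le> N \<Longrightarrow> j \<le> N \<Longrightarrow> k \<le> N \<Longrightarrow> rho (U i j k) > 0"
    and jameson: "\<And>\<iota> v nL nR UL UR. \<iota> \<in> {1..3} \<Longrightarrow> v \<in> {1..3} \<Longrightarrow> rho UL > 0 \<Longrightarrow> rho UR > 0 \<Longrightarrow>
        Gs \<iota> nL nR UL UR (v + 1) = Gs \<iota> nL nR UL UR 1 * ((vel UL v + vel UR v) / 2)
          + (if \<iota> = v then (pres \<gamma> UL + pres \<gamma> UR) / 2 else 0)"
    and ijk: "i \<le> N" "j \<le> N" "k \<le> N"
  shows "(\<Sum>c=1..5. kin_grad (U i j k) c * vol_op N D Gs Ja nu U i j k c)
       = (\<Sum>m=0..N. 2 * D i m * kin_pair_flux Gs Ja nu U 1 i j k m j k)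
       + (\<Sum>m=0..N. 2 * D j m * kin_pair_flux Gs Ja nu U 2 i j k i m k)
       + (\<Sum>m=0..N. 2 * D k m * kin_pair_flux Gs Ja nu U 3 i j k i j m)
       + (1 / 2) * (\<Sum>\<iota>=1..3. \<Sum>\<beta>=1..3.
             (dxi N D \<iota> (\<lambda>i j k. pres \<gamma> (U i j k)) i j k * Ja \<iota> \<beta> i j k
              + pres \<gamma> (U i j k) * dxi N D \<iota> (\<lambda>i' j' k'. Ja \<iota> \<beta> i' j' k') i j k
              + dxi N D \<iota> (\<lambda>i' j' k'. pres \<gamma> (U i' j' k') * Ja \<iota> \<beta> i' j' k') i j k)
             * vel (U i j k) \<beta>)"
proof -
  let ?V = "U i j k" and ?p = "\<lambda>i j k. pres \<gamma> (U i j k)"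
  have contract: "(\<Sum>c=1..5. kin_grad UL c * Gs \<beta> nL nR UL UR c)
      = Gs \<beta> nL nR UL UR 1 * vel_dot UL UR / 2 + vel UL \<beta> * ((pres \<gamma> UL + pres \<gamma> UR) / 2)"
    if "\<beta> \<in> {1..3}" "rho UL > 0" "rho UR > 0" for \<beta> nL nR UL UR
    using that by (intro kin_grad_jameson[where G = "Gs \<beta> nL nR UL UR"] jameson)
  have "(\<Sum>c=1..5. kin_grad ?V c * vol_op N D Gs Ja nu U i j k c)
      = (\<Sum>c=1..5. kin_grad ?V c * (\<Sum>m=0..N. \<Sum>\<beta>=1..3. 2 * D i m * Gs \<beta> (nu i j k) (nu m j k) ?V (U m j k) c
            * ((Ja 1 \<beta> i j k + Ja 1 \<beta> m j k) / 2)))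
      + (\<Sum>c=1..5. kin_grad ?V c * (\<Sum>m=0..N. \<Sum>\<beta>=1..3. 2 * D j m * Gs \<beta> (nu i j k) (nu i m k) ?V (U i m k) c
            * ((Ja 2 \<beta> i j k + Ja 2 \<beta> i m k) / 2)))
      + (\<Sum>c=1..5. kin_grad ?V c * (\<Sum>m=0..N. \<Sum>\<beta>=1..3. 2 * D k m * Gs \<beta> (nu i j k) (nu i j m) ?V (U i j m) c
            * ((Ja 3 \<beta> i j k + Ja 3 \<beta> i j m) / 2)))"
    unfolding vol_op_def by (simp only: sum.distrib distrib_left)
  also have "\<dots> = (\<Sum>m=0..N. 2 * D i m * kin_pair_flux Gs Ja nu U 1 i j k m j k)
      + (\<Sum>\<beta>=1..3. vel ?V \<beta> * (\<Sum>m=0..N. 2 * D i m * ((?p i j k + ?p m j k) / 2)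
            * ((Ja 1 \<beta> i j k + Ja 1 \<beta> m j k) / 2)))
      + ((\<Sum>m=0..N. 2 * D j m * kin_pair_flux Gs Ja nu U 2 i j k i m k)
      + (\<Sum>\<beta>=1..3. vel ?V \<beta> * (\<Sum>m=0..N. 2 * D j m * ((?p i j k + ?p i m k) / 2)
            * ((Ja 2 \<beta> i j k + Ja 2 \<beta> i m k) / 2))))
      + ((\<Sum>m=0..N. 2 * D k m * kin_pair_flux Gs Ja nu U 3 i j k i j m)
      + (\<Sum>\<beta>=1..3. vel ?V \<beta> * (\<Sum>m=0..N. 2 * D k m * ((?p i j k + ?p i j m) / 2)
            * ((Ja 3 \<beta> i j k + Ja 3 \<beta> i j m) / 2))))"
    unfolding kin_pair_flux_def using ijk
    by (intro arg_cong2[where f = "(+)"] kin_grad_two_point_sum contract pos) auto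
  finally show ?thesis
    using two_point_sums_split_form[where D = D and P = "\<lambda>i j k. pres \<gamma> (U i j k)" and A = Ja and w = "vel ?V",
        OF rows ijk]
    by linarith
qed

lemma wsum_kin_grad_vol_op:
  fixes D :: "nat \<Rightarrow> nat \<Rightarrow> real" and U :: "nat \<Rightarrow> nat \<Rightarrow> nat \<Rightarrow> nat \<Rightarrow> real"
  assumes D: "sbp_operator N \<omega> D"
    and pos: "\<And>i j k. i \<le> N \<Longrightarrow> j \<le> N \<Longrightarrow> k \<le> N \<Longrightarrow> rho (U i j k) > 0"
    and mass_sym: "\<And>\<iota> nL nR UL UR. \<iota> \<in> {1..3} \<Longrightarrow> rho UL > 0 \<Longrightarrow> rho UR > 0 \<Longrightarrow>
      Gs \<iota> nL nR UL UR 1 = Gs \<iota> nR nL UR UL 1"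
    and mass_cons: "\<And>\<iota> n V. \<iota> \<in> {1..3} \<Longrightarrow> rho V > 0 \<Longrightarrow> Gs \<iota> n n V V 1 = rho V * (vel V \<iota> - n \<iota>)"
    and jameson: "\<And>\<iota> v nL nR UL UR. \<iota> \<in> {1..3} \<Longrightarrow> v \<in> {1..3} \<Longrightarrow> rho UL > 0 \<Longrightarrow> rho UR > 0 \<Longrightarrow>
        Gs \<iota> nL nR UL UR (v + 1) = Gs \<iota> nL nR UL UR 1 * ((vel UL v + vel UR v) / 2)
          + (if \<iota> = v then (pres \<gamma> UL + pres \<gamma> UR) / 2 else 0)"
  shows "wsum N \<omega> (\<lambda>i j k. \<Sum>c=1..5. kin_grad (U i j k) c * vol_op N D Gs Ja nu U i j k c)
       = surf_int N \<omega> (\<lambda>\<kappa> \<sigma> a b. case fnode N \<kappa> \<sigma> a b of (i, j, k) \<Rightarrow>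
           \<Sum>\<iota>=1..3. nhat \<kappa> \<sigma> \<iota> * (\<Sum>\<beta>=1..3. Ja \<iota> \<beta> i j k * kin_flux (nu i j k) (U i j k) \<beta>))
       + (1 / 2) * (\<Sum>\<iota>=1..3. wsum N \<omega> (\<lambda>i j k. \<Sum>\<beta>=1..3.
             (dxi N D \<iota> (\<lambda>i j k. pres \<gamma> (U i j k)) i j k * Ja \<iota> \<beta> i j k
              + pres \<gamma> (U i j k) * dxi N D \<iota> (\<lambda>i' j' k'. Ja \<iota> \<beta> i' j' k') i j k
              + dxi N D \<iota> (\<lambda>i' j' k'. pres \<gamma> (U i' j' k') * Ja \<iota> \<beta> i' j' k') i j k)
             * vel (U i j k) \<beta>))"
proof -
  let ?K = "kin_pair_flux Gs Ja nu U"
  let ?g = "\<lambda>\<iota> i j k. \<Sum>\<beta>=1..3. Ja \<iota> \<beta> i j k * kin_flux (nu i j k) (U i j k) \<beta>"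
  have rows: "\<And>i. i \<le> N \<Longrightarrow> (\<Sum>m=0..N. D i m) = 0" using D by (simp add: sbp_operator_def)
  have sym: "?K \<iota> i j k i' j' k' = ?K \<iota> i' j' k' i j k"
    if "i \<le> N" "j \<le> N" "k \<le> N" "i' \<le> N" "j' \<le> N" "k' \<le> N" for \<iota> i j k i' j' k'
    using that by (intro kin_pair_flux_commute mass_sym pos) auto
  have self: "?K \<iota> i j k i j k = ?g \<iota> i j k" if "i \<le> N" "j \<le> N" "k \<le> N" for \<iota> i j k
    using that by (intro kin_pair_flux_self mass_cons pos) auto
  have faces: "wsum N \<omega> (\<lambda>i j k. \<Sum>m=0..N. 2 * D i m * ?K 1 i j k m j k)
      + wsum N \<omega> (\<lambda>i j k. \<Sum>m=0..N. 2 * D j m * ?K 2 i j k i m k)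
      + wsum N \<omega> (\<lambda>i j k. \<Sum>m=0..N. 2 * D k m * ?K 3 i j k i j m)
      = surf_int N \<omega> (\<lambda>\<kappa> \<sigma> a b. case fnode N \<kappa> \<sigma> a b of (i, j, k) \<Rightarrow>
          \<Sum>\<iota>=1..3. nhat \<kappa> \<sigma> \<iota> * ?g \<iota> i j k)"
    unfolding surf_int_nhat
    using wsum_sbp_two_point(1)[OF D, of "\<lambda>i m j k. ?K 1 i j k m j k"]
      wsum_sbp_two_point(2)[OF D, of "\<lambda>j m i k. ?K 2 i j k i m k"]
      wsum_sbp_two_point(3)[OF D, of "\<lambda>k m i j. ?K 3 i j k i j m"]
    by (simp add: sym self)
  show ?thesis
    unfolding faces[symmetric] wsum_sum[symmetric] wsum_cmult[symmetric] wsum_add[symmetric]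
    by (rule wsum_cong, rule kin_grad_vol_op[OF rows pos jameson]) auto
qed

section \<open>The surface term\<close>

lemma kin_grad_surf_flux_contra:
  assumes jameson: "\<And>\<iota> v. \<iota> \<in> {1..3} \<Longrightarrow> v \<in> {1..3} \<Longrightarrow>
      Gstar \<iota> n Um Up (v + 1) = Gstar \<iota> n Um Up 1 * ((vel Um v + vel Up v) / 2) + (if \<iota> = v then p else 0)"
  shows "(\<Sum>c=1..5. kin_grad Um c * surf_flux_contra Gstar JaN \<kappa> \<sigma> n Um Up c)
       = (\<Sum>\<iota>=1..3. snvec JaN \<kappa> \<sigma> \<iota> * (Gstar \<iota> n Um Up 1 * vel_dot Um Up / 2 + vel Um \<iota> * p))"
proof -
  have "(\<Sum>c=1..5. kin_grad Um c * surf_flux_contra Gstar JaN \<kappa> \<sigma> n Um Up c)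
      = (\<Sum>\<iota>=1..3. shat JaN \<kappa> \<sigma> * nvec JaN \<kappa> \<sigma> \<iota> * (\<Sum>c=1..5. kin_grad Um c * Gstar \<iota> n Um Up c))"
    unfolding surf_flux_contra_def
    by (simp only: sum_distrib_left) (subst sum.swap, simp add: mult_ac)
  also have "\<dots> = (\<Sum>\<iota>=1..3. snvec JaN \<kappa> \<sigma> \<iota> * (Gstar \<iota> n Um Up 1 * vel_dot Um Up / 2 + vel Um \<iota> * p))"
  proof (rule sum.cong[OF refl])
    fix \<iota> :: nat assume \<iota>: "\<iota> \<in> {1..3}"
    show "shat JaN \<kappa> \<sigma> * nvec JaN \<kappa> \<sigma> \<iota> * (\<Sum>c=1..5. kin_grad Um c * Gstar \<iota> n Um Up c)
        = snvec JaN \<kappa> \<sigma> \<iota> * (Gstar \<iota> n Um Up 1 * vel_dot Um Up / 2 + vel Um \<iota> * p)"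
      using shat_mult_nvec[OF \<iota>] kin_grad_jameson[where G = "Gstar \<iota> n Um Up", OF \<iota> jameson[OF \<iota>]]
      by simp
  qed
  finally show ?thesis .
qed

lemma kin_grad_flux_contra:
  assumes "rho Um > 0"
  shows "(\<Sum>c=1..5. kin_grad Um c * flux_contra \<gamma> JaN \<kappa> \<sigma> n Um c)
       = (\<Sum>\<iota>=1..3. nhat \<kappa> \<sigma> \<iota> * (\<Sum>\<beta>=1..3. JaN \<iota> \<beta> * kin_flux n Um \<beta>))
         + (\<Sum>\<beta>=1..3. snvec JaN \<kappa> \<sigma> \<beta> * (pres \<gamma> Um * vel Um \<beta>))"
proof -
  have "(\<Sum>c=1..5. kin_grad Um c * flux_contra \<gamma> JaN \<kappa> \<sigma> n Um c)
      = (\<Sum>\<iota>=1..3. nhat \<kappa> \<sigma> \<iota> * (\<Sum>\<beta>=1..3. JaN \<iota> \<beta>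
           * (\<Sum>c=1..5. kin_grad Um c * (flux \<gamma> \<beta> Um c - n \<beta> * Um c))))"
    unfolding flux_contra_def
    by (simp only: sum_distrib_left) (subst sum_swap3, simp add: mult_ac)
  also have "\<dots> = (\<Sum>\<iota>=1..3. nhat \<kappa> \<sigma> \<iota> * (\<Sum>\<beta>=1..3. JaN \<iota> \<beta> * (kin_flux n Um \<beta> + pres \<gamma> Um * vel Um \<beta>)))"
    by (intro sum.cong refl arg_cong2[where f = "(*)"] kin_grad_flux assms) auto
  also have "\<dots> = (\<Sum>\<iota>=1..3. nhat \<kappa> \<sigma> \<iota> * (\<Sum>\<beta>=1..3. JaN \<iota> \<beta> * kin_flux n Um \<beta>))
      + (\<Sum>\<beta>=1..3. snvec JaN \<kappa> \<sigma> \<beta> * (pres \<gamma> Um * vel Um \<beta>))"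
    unfolding snvec_def sum_1_to_3 by (simp add: algebra_simps)
  finally show ?thesis .
qed

lemma kin_grad_surface_flux:
  assumes pos: "rho Um > 0"
    and jameson: "\<And>\<iota> v. \<iota> \<in> {1..3} \<Longrightarrow> v \<in> {1..3} \<Longrightarrow>
      Gstar \<iota> n Um Up (v + 1) = Gstar \<iota> n Um Up 1 * ((vel Um v + vel Up v) / 2) + (if \<iota> = v then p else 0)"
  shows "(\<Sum>c=1..5. kin_grad Um c *
            (surf_flux_contra Gstar JaN \<kappa> \<sigma> n Um Up c - flux_contra \<gamma> JaN \<kappa> \<sigma> n Um c))
     = (\<Sum>\<iota>=1..3. shat JaN \<kappa> \<sigma> * nvec JaN \<kappa> \<sigma> \<iota>
          * ((1 / 2) * ubar2 Um Up * Gstar \<iota> n Um Up 1 + (p - pres \<gamma> Um) * vel Um \<iota>))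
       - (\<Sum>\<iota>=1..3. nhat \<kappa> \<sigma> \<iota> * (\<Sum>\<beta>=1..3. JaN \<iota> \<beta> * kin_flux n Um \<beta>))"
proof -
  have "(\<Sum>\<iota>=1..3. shat JaN \<kappa> \<sigma> * nvec JaN \<kappa> \<sigma> \<iota>
          * ((1 / 2) * ubar2 Um Up * Gstar \<iota> n Um Up 1 + (p - pres \<gamma> Um) * vel Um \<iota>))
      = (\<Sum>\<iota>=1..3. snvec JaN \<kappa> \<sigma> \<iota> * (Gstar \<iota> n Um Up 1 * vel_dot Um Up / 2 + vel Um \<iota> * p))
        - (\<Sum>\<iota>=1..3. snvec JaN \<kappa> \<sigma> \<iota> * (pres \<gamma> Um * vel Um \<iota>))"
    unfolding sum_subtractf[symmetric]
    by (intro sum.cong refl) (simp add: shat_mult_nvec ubar2_eq_vel_dot algebra_simps)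
  then show ?thesis
    unfolding right_diff_distrib sum_subtractf
    using kin_grad_surf_flux_contra[where Gstar = Gstar, OF jameson] kin_grad_flux_contra[OF pos] by simp
qed

lemma surf_int_kin_grad_surface_flux:
  fixes U :: "nat \<Rightarrow> nat \<Rightarrow> nat \<Rightarrow> nat \<Rightarrow> real"
  assumes pos: "\<And>i j k. i \<le> N \<Longrightarrow> j \<le> N \<Longrightarrow> k \<le> N \<Longrightarrow> rho (U i j k) > 0"
    and pos_ext: "\<And>\<kappa> \<sigma> a b. \<kappa> \<in> {1..3} \<Longrightarrow> a \<le> N \<Longrightarrow> b \<le> N \<Longrightarrow> rho (Uext \<kappa> \<sigma> a b) > 0"
    and jameson: "\<And>\<iota> v n Um Up. \<iota> \<in> {1..3} \<Longrightarrow> v \<in> {1..3} \<Longrightarrow> rho Um > 0 \<Longrightarrow> rho Up > 0 \<Longrightarrow>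
      Gstar \<iota> n Um Up (v + 1) = Gstar \<iota> n Um Up 1 * ((vel Um v + vel Up v) / 2)
        + (if \<iota> = v then pstar Um Up else 0)"
  shows "surf_int N \<omega> (\<lambda>\<kappa> \<sigma> a b. case fnode N \<kappa> \<sigma> a b of (i, j, k) \<Rightarrow>
            \<Sum>c=1..5. kin_grad (U i j k) c *
              (surf_flux_contra Gstar (\<lambda>\<iota> \<beta>. Ja \<iota> \<beta> i j k) \<kappa> \<sigma> (nu i j k) (U i j k) (Uext \<kappa> \<sigma> a b) c
               - flux_contra \<gamma> (\<lambda>\<iota> \<beta>. Ja \<iota> \<beta> i j k) \<kappa> \<sigma> (nu i j k) (U i j k) c))
     = (\<Sum>\<iota>=1..3. surf_int N \<omega> (\<lambda>\<kappa> \<sigma> a b. case fnode N \<kappa> \<sigma> a b of (i, j, k) \<Rightarrow>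
            shat (\<lambda>\<iota>' \<beta>. Ja \<iota>' \<beta> i j k) \<kappa> \<sigma> * nvec (\<lambda>\<iota>' \<beta>. Ja \<iota>' \<beta> i j k) \<kappa> \<sigma> \<iota>
            * ((1 / 2) * ubar2 (U i j k) (Uext \<kappa> \<sigma> a b) * Gstar \<iota> (nu i j k) (U i j k) (Uext \<kappa> \<sigma> a b) 1
               + (pstar (U i j k) (Uext \<kappa> \<sigma> a b) - pres \<gamma> (U i j k)) * vel (U i j k) \<iota>)))
       - surf_int N \<omega> (\<lambda>\<kappa> \<sigma> a b. case fnode N \<kappa> \<sigma> a b of (i, j, k) \<Rightarrow>
            \<Sum>\<iota>=1..3. nhat \<kappa> \<sigma> \<iota> * (\<Sum>\<beta>=1..3. Ja \<iota> \<beta> i j k * kin_flux (nu i j k) (U i j k) \<beta>))"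
  unfolding surf_int_sum[symmetric] surf_int_diff[symmetric]
  apply (rule surf_int_cong)
  subgoal premises face for \<kappa> \<sigma> a b
  proof -
    obtain i j k where node: "fnode N \<kappa> \<sigma> a b = (i, j, k)" by (cases "fnode N \<kappa> \<sigma> a b") auto
    have "rho (U i j k) > 0" using fnode_le[OF face(2,3) node] by (rule pos)
    then show ?thesis
      unfolding node prod.case
      by (intro kin_grad_surface_flux jameson pos_ext face)
  qed
  done

theorem theorem3p1:
  fixes N :: nat and \<xi> \<omega> :: "nat \<Rightarrow> real" and \<gamma> :: real
    and J :: "real \<Rightarrow> nat \<Rightarrow> nat \<Rightarrow> nat \<Rightarrow> real"
    and U :: "real \<Rightarrow> nat \<Rightarrow> nat \<Rightarrow> nat \<Rightarrow> nat \<Rightarrow> real"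
    and Ja :: "real \<Rightarrow> nat \<Rightarrow> nat \<Rightarrow> nat \<Rightarrow> nat \<Rightarrow> nat \<Rightarrow> real"
    and nu :: "real \<Rightarrow> nat \<Rightarrow> nat \<Rightarrow> nat \<Rightarrow> nat \<Rightarrow> real"
    and Uext :: "real \<Rightarrow> nat \<Rightarrow> bool \<Rightarrow> nat \<Rightarrow> nat \<Rightarrow> nat \<Rightarrow> real"
    and Gsharp :: "nat \<Rightarrow> (nat \<Rightarrow> real) \<Rightarrow> (nat \<Rightarrow> real) \<Rightarrow> (nat \<Rightarrow> real) \<Rightarrow> (nat \<Rightarrow> real) \<Rightarrow> nat \<Rightarrow> real"
    and Gstar :: "nat \<Rightarrow> (nat \<Rightarrow> real) \<Rightarrow> (nat \<Rightarrow> real) \<Rightarrow> (nat \<Rightarrow> real) \<Rightarrow> nat \<Rightarrow> real"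
    and pstar :: "(nat \<Rightarrow> real) \<Rightarrow> (nat \<Rightarrow> real) \<Rightarrow> real"
  assumes quad: "lgl_quadrature N \<xi> \<omega>"
    and gamma: "\<gamma> > 1"
    and pos_int: "\<forall>\<tau> i j k. i \<le> N \<and> j \<le> N \<and> k \<le> N \<longrightarrow> rho (U \<tau> i j k) > 0"
    and pos_ext: "\<forall>\<tau> \<kappa> \<sigma> a b. \<kappa> \<in> {1..3} \<and> a \<le> N \<and> b \<le> N \<longrightarrow> rho (Uext \<tau> \<kappa> \<sigma> a b) > 0"
    and diff_J: "\<forall>\<tau> i j k. (\<lambda>s. J s i j k) differentiable (at \<tau>)"
    and diff_U: "\<forall>\<tau> i j k c. (\<lambda>s. U s i j k c) differentiable (at \<tau>)"
    and vol_sym: "\<forall>\<iota> \<in> {1..3}. \<forall>nL nR UL UR. rho UL > 0 \<longrightarrow> rho UR > 0 \<longrightarrow>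
                    (\<forall>c\<in>{1..5}. Gsharp \<iota> nL nR UL UR c = Gsharp \<iota> nR nL UR UL c)"
    and vol_cons: "\<forall>\<iota> \<in> {1..3}. \<forall>nL nR V. rho V > 0 \<longrightarrow>
                    (\<forall>c\<in>{1..5}. Gsharp \<iota> nL nR V V c = flux \<gamma> \<iota> V c - ((nL \<iota> + nR \<iota>) / 2) * V c)"
    and vol_jameson: "\<forall>\<iota> \<in> {1..3}. \<forall>v \<in> {1..3}. \<forall>nL nR UL UR. rho UL > 0 \<longrightarrow> rho UR > 0 \<longrightarrow>
                    Gsharp \<iota> nL nR UL UR (v + 1) =
                      Gsharp \<iota> nL nR UL UR 1 * ((vel UL v + vel UR v) / 2)
                      + (if \<iota> = v then (pres \<gamma> UL + pres \<gamma> UR) / 2 else 0)"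
    and surf_jameson: "\<forall>\<iota> \<in> {1..3}. \<forall>v \<in> {1..3}. \<forall>n Um Up. rho Um > 0 \<longrightarrow> rho Up > 0 \<longrightarrow>
                    Gstar \<iota> n Um Up (v + 1) =
                      Gstar \<iota> n Um Up 1 * ((vel Um v + vel Up v) / 2)
                      + (if \<iota> = v then pstar Um Up else 0)"
    and pstar_cons: "\<forall>V. rho V > 0 \<longrightarrow> pstar V V = pres \<gamma> V"
    and mass_cons: "\<forall>\<iota> \<in> {1..3}. \<forall>n V. rho V > 0 \<longrightarrow> Gstar \<iota> n V V 1 = rho V * (vel V \<iota> - n \<iota>)"
    and scheme: "\<forall>\<tau> (\<phi> :: nat \<Rightarrow> nat \<Rightarrow> nat \<Rightarrow> nat \<Rightarrow> real).
       wsum N \<omega> (\<lambda>i j k. \<Sum>c=1..5. \<phi> i j k c * deriv (\<lambda>s. J s i j k * U s i j k c) \<tau>)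
       = - wsum N \<omega> (\<lambda>i j k. \<Sum>c=1..5. \<phi> i j k c *
                         vol_op N (dmat N \<xi>) Gsharp (Ja \<tau>) (nu \<tau>) (U \<tau>) i j k c)
         - surf_int N \<omega> (\<lambda>\<kappa> \<sigma> a b. case fnode N \<kappa> \<sigma> a b of (i, j, k) \<Rightarrow>
              \<Sum>c=1..5. \<phi> i j k c *
                (surf_flux_contra Gstar (\<lambda>\<iota> \<beta>. Ja \<tau> \<iota> \<beta> i j k) \<kappa> \<sigma> (nu \<tau> i j k)
                    (U \<tau> i j k) (Uext \<tau> \<kappa> \<sigma> a b) c
                 - flux_contra \<gamma> (\<lambda>\<iota> \<beta>. Ja \<tau> \<iota> \<beta> i j k) \<kappa> \<sigma> (nu \<tau> i j k) (U \<tau> i j k) c))"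
  shows "\<forall>\<tau>. ((\<lambda>s. wsum N \<omega> (\<lambda>i j k. kin (U s i j k) * J s i j k)) has_real_derivative
     (let D = dmat N \<xi>; P = (\<lambda>i j k. pres \<gamma> (U \<tau> i j k)) in
       - (1 / 2) * (\<Sum>\<iota>=1..3. wsum N \<omega> (\<lambda>i j k. \<Sum>\<beta>=1..3.
             (dxi N D \<iota> P i j k * Ja \<tau> \<iota> \<beta> i j k
              + P i j k * dxi N D \<iota> (\<lambda>i' j' k'. Ja \<tau> \<iota> \<beta> i' j' k') i j k
              + dxi N D \<iota> (\<lambda>i' j' k'. P i' j' k' * Ja \<tau> \<iota> \<beta> i' j' k') i j k)
             * vel (U \<tau> i j k) \<beta>))
       - (\<Sum>\<iota>=1..3. surf_int N \<omega> (\<lambda>\<kappa> \<sigma> a b. case fnode N \<kappa> \<sigma> a b of (i, j, k) \<Rightarrow>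
             shat (\<lambda>\<iota>' \<beta>. Ja \<tau> \<iota>' \<beta> i j k) \<kappa> \<sigma> * nvec (\<lambda>\<iota>' \<beta>. Ja \<tau> \<iota>' \<beta> i j k) \<kappa> \<sigma> \<iota>
             * ((1 / 2) * ubar2 (U \<tau> i j k) (Uext \<tau> \<kappa> \<sigma> a b)
                  * Gstar \<iota> (nu \<tau> i j k) (U \<tau> i j k) (Uext \<tau> \<kappa> \<sigma> a b) 1
                + (pstar (U \<tau> i j k) (Uext \<tau> \<kappa> \<sigma> a b) - pres \<gamma> (U \<tau> i j k))
                  * vel (U \<tau> i j k) \<iota>)))))
     (at \<tau>)"
proof (rule allI, goal_cases)
  case (1 \<tau>)
  have pos: "\<And>i j k. i \<le> N \<Longrightarrow> j \<le> N \<Longrightarrow> k \<le> N \<Longrightarrow> rho (U \<tau> i j k) > 0"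
    using pos_int by blast
  have ext_pos: "\<And>\<kappa> \<sigma> a b. \<kappa> \<in> {1..3} \<Longrightarrow> a \<le> N \<Longrightarrow> b \<le> N \<Longrightarrow> rho (Uext \<tau> \<kappa> \<sigma> a b) > 0"
    using pos_ext by blast
  have vol_mass_sym: "\<And>\<iota> nL nR UL UR. \<iota> \<in> {1..3} \<Longrightarrow> rho UL > 0 \<Longrightarrow> rho UR > 0 \<Longrightarrow>
      Gsharp \<iota> nL nR UL UR 1 = Gsharp \<iota> nR nL UR UL 1"
    using vol_sym by simp
  have vol_mass_cons: "Gsharp \<iota> n n V V 1 = rho V * (vel V \<iota> - n \<iota>)"
    if "\<iota> \<in> {1..3}" "rho V > 0" for \<iota> n V
  proof -
    have "Gsharp \<iota> n n V V 1 = flux \<gamma> \<iota> V 1 - ((n \<iota> + n \<iota>) / 2) * V 1"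
      using vol_cons that by auto
    then show ?thesis by (simp add: flux_def rho_def algebra_simps)
  qed
  have kin_deriv: "((\<lambda>s. wsum N \<omega> (\<lambda>i j k. kin (U s i j k) * J s i j k)) has_real_derivative
      wsum N \<omega> (\<lambda>i j k. \<Sum>c=1..5. kin_grad (U \<tau> i j k) c * deriv (\<lambda>s. J s i j k * U s i j k c) \<tau>)) (at \<tau>)"
    using diff_U diff_J pos by (intro wsum_kin_has_derivative) auto
  note volume = wsum_kin_grad_vol_op[where Gs = Gsharp and \<gamma> = \<gamma> and U = "U \<tau>" and Ja = "Ja \<tau>"
      and nu = "nu \<tau>", OF sbp_operator_dmat[OF quad] pos vol_mass_sym vol_mass_cons vol_jameson[rule_format]]
  note surface = surf_int_kin_grad_surface_flux[where Gstar = Gstar and pstar = pstar and U = "U \<tau>"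
      and Uext = "Uext \<tau>" and Ja = "Ja \<tau>" and nu = "nu \<tau>", OF pos ext_pos surf_jameson[rule_format]]
  show ?case
    unfolding Let_def
    by (rule DERIV_cong[OF kin_deriv])
       (simp only: scheme[rule_format, of "\<lambda>i j k. kin_grad (U \<tau> i j k)" \<tau>] volume surface)
qed

end
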